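(* Let $r>0$ be the maximum range, and let $d_s$ and $\theta_s$ be parameters with $0\le d_s\le 2r$ and $0^\circ\le\theta_s\le 60^\circ$. Let $Q_i,Q_j,Q_k\in\mathbb{R}^2$ be the locations of a triplet of reference nodes (with parameters $d_s,\theta_s$), forming the triangle $q=\triangle Q_iQ_jQ_k$. Let $U\in\mathbb{R}^2$, $U\notin\{Q_i,Q_j,Q_k\}$, be the position of a user terminal that has LoS conditions to all three nodes, in particular $\|UQ_i\|,\|UQ_j\|,\|UQ_k\|\le r$. Let $\theta_E$ be the effective visibility angle of $U$. Then $$|90^\circ-\theta_E|\le 90^\circ-\theta_s\quad\text{if } U \text{ lies inside } q,$$ and $$|90^\circ-\theta_E|\le 90^\circ-2\arctan\!\Big(\frac{d_s}{2r}\tan\big(\tfrac{\theta_s}{2}\big)\Big)\quad\text{if } U \text{ lies outside } q.$$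
   Context: A triplet of reference nodes with minimum separation distance $d_s$ and minimum separation angle $\theta_s$ is a set of three points $Q_i,Q_j,Q_k$ that are the vertices of a triangle $q$ such that all three side lengths of $q$ are at least $d_s$ and all three interior angles $\hat Q_i,\hat Q_j,\hat Q_k$ of $q$ are at least $\theta_s$. For a point $U$, the (non-reflex) visibility angles are $\theta_{ij}=\angle Q_iUQ_j$, $\theta_{ik}=\angle Q_iUQ_k$, $\theta_{jk}=\angle Q_jUQ_k$, each taken in $[0^\circ,180^\circ]$. The effective visibility angle (EVA) $\theta_E$ of $U$ is the one among $\theta_{ij},\theta_{ik},\theta_{jk}$ that is closest to $90^\circ$, i.e. minimizes $|90^\circ-\theta|$. *)

theory Defs
  imports "HOL-Analysis.Analysis"
begin

text \<open>Angles are measured in radians: 90 degrees = pi/2, 60 degrees = pi/3.\<close>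

definition vangle :: "real^2 \<Rightarrow> real^2 \<Rightarrow> real" where
  "vangle u v = arccos ((u \<bullet> v) / (norm u * norm v))"

definition angle3 :: "real^2 \<Rightarrow> real^2 \<Rightarrow> real^2 \<Rightarrow> real" where
  "angle3 A B C = vangle (A - B) (C - B)"

definition ref_triplet :: "real \<Rightarrow> real \<Rightarrow> real^2 \<Rightarrow> real^2 \<Rightarrow> real^2 \<Rightarrow> bool" where
  "ref_triplet ds ths Qi Qj Qk \<longleftrightarrow>
     \<not> collinear {Qi, Qj, Qk} \<and>
     dist Qi Qj \<ge> ds \<and> dist Qi Qk \<ge> ds \<and> dist Qj Qk \<ge> ds \<and>
     angle3 Qj Qi Qk \<ge> ths \<and> angle3 Qi Qj Qk \<ge> ths \<and> angle3 Qi Qk Qj \<ge> ths"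

definition eva :: "real^2 \<Rightarrow> real^2 \<Rightarrow> real^2 \<Rightarrow> real^2 \<Rightarrow> real" where
  "eva U Qi Qj Qk =
     (let tij = angle3 Qi U Qj; tik = angle3 Qi U Qk; tjk = angle3 Qj U Qk in
      if \<bar>pi/2 - tij\<bar> \<le> \<bar>pi/2 - tik\<bar> \<and> \<bar>pi/2 - tij\<bar> \<le> \<bar>pi/2 - tjk\<bar> then tij
      else if \<bar>pi/2 - tik\<bar> \<le> \<bar>pi/2 - tjk\<bar> then tik else tjk)"

end

theory Submission
  imports Defs
begin

text \<open>Inside the triangle, each visibility angle is at least the opposite angle of the triangle,
  hence at least \<open>\<theta>\<^sub>s\<close>; since the three unit vectors towards the nodes cannot have all pairwise
  cosines below \<open>-1/2\<close>, one of the angles is also at most \<open>180\<degree> - \<theta>\<^sub>s\<close>.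

  Outside the triangle, \<open>U\<close> sees one node, say \<open>Q\<^sub>k\<close>, inside the angle \<open>Q\<^sub>i U Q\<^sub>j\<close>. The incircle
  of the triangle has radius at least \<open>(d\<^sub>s/2) tan (\<theta>\<^sub>s/2)\<close> and its center lies within distance \<open>r\<close>
  of \<open>U\<close> inside that angle, so \<open>Q\<^sub>i U Q\<^sub>j\<close> is at least \<open>\<phi> = 2 arctan ((d\<^sub>s/2r) tan (\<theta>\<^sub>s/2))\<close>.
  Either it is also at most \<open>180\<degree> - \<phi>\<close>, or its two parts \<open>Q\<^sub>i U Q\<^sub>k\<close> and \<open>Q\<^sub>k U Q\<^sub>j\<close> are not
  both smaller than \<open>\<phi>\<close>, while each is at most \<open>180\<degree> - \<theta>\<^sub>s \<le> 180\<degree> - \<phi>\<close> as an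
  exterior-angle bound.

  Angles are handled through their cosines and the planar cross product, which turns every
  step into an algebraic inequality.\<close>

subsection \<open>Cross product and angles in the plane\<close>

definition cross2 :: "real^2 \<Rightarrow> real^2 \<Rightarrow> real" where
  "cross2 u v = u$1 * v$2 - u$2 * v$1"

lemma inner_vec2: "(u::real^2) \<bullet> v = u$1 * v$1 + u$2 * v$2"
  by (simp add: inner_vec_def sum_2)

lemma norm_vec2_sq: "(norm (u::real^2))\<^sup>2 = u$1 * u$1 + u$2 * u$2"
  unfolding power2_norm_eq_inner inner_vec2 ..

lemma inner_sq_add_cross2_sq: "(u \<bullet> v)\<^sup>2 + (cross2 u v)\<^sup>2 = (norm u)\<^sup>2 * (norm v)\<^sup>2"
  unfolding norm_vec2_sq inner_vec2 cross2_def by (simp add: power2_eq_square algebra_simps)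

lemma cross2_simps:
  "cross2 (u + v) w = cross2 u w + cross2 v w" "cross2 w (u + v) = cross2 w u + cross2 w v"
  "cross2 (u - v) w = cross2 u w - cross2 v w" "cross2 w (u - v) = cross2 w u - cross2 w v"
  "cross2 (c *\<^sub>R u) w = c * cross2 u w" "cross2 w (c *\<^sub>R u) = c * cross2 w u"
  "cross2 u u = 0" "cross2 v u = - cross2 u v"
  by (simp_all add: cross2_def algebra_simps)

lemma collinear_if_cross2_eq_0:
  assumes "cross2 (B - A) (C - A) = 0"
  shows "collinear {A, B, C}"
proof (cases "A = C")
  case True
  then show ?thesis by (simp add: collinear_3_expand)
next
  case False
  define d w where "d = A - C" and "w = B - C"
  have "(norm d)\<^sup>2 \<noteq> 0" using False by (simp add: d_def)
  then have d0: "d$1 * d$1 + d$2 * d$2 \<noteq> 0" by (metis norm_vec2_sq)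
  have c0: "w$1 * d$2 = w$2 * d$1"
    using assms unfolding d_def w_def cross2_def by (simp add: algebra_simps)
  define u where "u = (w$1 * d$1 + w$2 * d$2) / (d$1 * d$1 + d$2 * d$2)"
  have "w = u *\<^sub>R d"
  proof -
    have "w$1 * (d$1 * d$1 + d$2 * d$2) = (w$1 * d$1 + w$2 * d$2) * d$1"
      "w$2 * (d$1 * d$1 + d$2 * d$2) = (w$1 * d$1 + w$2 * d$2) * d$2"
      using c0 by (simp_all add: algebra_simps)
    then show ?thesis using d0 unfolding u_def by (simp add: vec_eq_iff forall_2 field_simps)
  qed
  then have "B = u *\<^sub>R A + (1 - u) *\<^sub>R C" unfolding w_def d_def by (simp add: algebra_simps)
  then show ?thesis by (auto simp: collinear_3_expand)
qed

lemma cross2_ne_0_if_not_collinear: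
  assumes "\<not> collinear {A, B, C}"
  shows "cross2 (B - A) (C - A) \<noteq> 0" "cross2 (A - B) (C - B) \<noteq> 0" "cross2 (A - C) (B - C) \<noteq> 0"
  using assms collinear_if_cross2_eq_0[where A = A and B = B and C = C]
    collinear_if_cross2_eq_0[where A = B and B = A and C = C]
    collinear_if_cross2_eq_0[where A = C and B = A and C = B] by (auto simp: insert_commute)

text \<open>Expanding the vector identity \<open>cross2 v w \<cdot> e = cross2 e w \<cdot> v - cross2 e v \<cdot> w\<close>
  with the triangle inequality.\<close>
lemma norm_mult_abs_cross2_le:
  "norm e * \<bar>cross2 v w\<bar> \<le> \<bar>cross2 e w\<bar> * norm v + \<bar>cross2 e v\<bar> * norm w"
proof -
  have "cross2 v w *\<^sub>R e = cross2 e w *\<^sub>R v - cross2 e v *\<^sub>R w"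
    by (simp add: vec_eq_iff forall_2 cross2_def algebra_simps)
  then have "norm (cross2 v w *\<^sub>R e) \<le> norm (cross2 e w *\<^sub>R v) + norm (cross2 e v *\<^sub>R w)"
    by (metis norm_triangle_ineq4)
  then show ?thesis by (simp add: mult.commute)
qed

text \<open>With \<open>N\<^sup>2 = d\<^sup>2 + x\<^sup>2\<close>, \<open>d / N\<close> is the cosine and \<open>d / \<bar>x\<bar>\<close> the cotangent of the same angle,
  and the cosine increases with the cotangent.\<close>
lemma cosine_le_of_cotangent_le_pos:
  fixes Na Nb da db xa xb :: real
  assumes Na: "0 < Na" and Nb: "0 < Nb" and ea: "Na\<^sup>2 = da\<^sup>2 + xa\<^sup>2" and eb: "Nb\<^sup>2 = db\<^sup>2 + xb\<^sup>2"
    and nz: "xa \<noteq> 0 \<or> xb \<noteq> 0" and cot: "db * \<bar>xa\<bar> \<le> da * \<bar>xb\<bar>" and db: "0 < db"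
  shows "db * Na \<le> da * Nb"
proof -
  have da: "0 < da"
  proof (cases "xa = 0")
    case True
    then have xb: "0 < \<bar>xb\<bar>" using nz by simp
    have "da \<noteq> 0"
    proof
      assume "da = 0"
      then have "Na\<^sup>2 = 0" using True ea by simp
      then show False using Na by simp
    qed
    moreover have "0 \<le> da * \<bar>xb\<bar>" using cot True by simp
    ultimately show ?thesis using xb by (simp add: zero_le_mult_iff)
  next
    case False
    then have "0 < db * \<bar>xa\<bar>" using db by simp
    then have "0 < da * \<bar>xb\<bar>" using cot by linarith
    then show ?thesis by (simp add: zero_less_mult_iff)
  qed
  have "(db * Na)\<^sup>2 - (da * Nb)\<^sup>2 = (db * \<bar>xa\<bar> - da * \<bar>xb\<bar>) * (db * \<bar>xa\<bar> + da * \<bar>xb\<bar>)"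
    unfolding power_mult_distrib ea eb by (simp add: power2_eq_square algebra_simps)
  also have "\<dots> \<le> 0" using cot da db by (intro mult_nonpos_nonneg) auto
  finally have "(db * Na)\<^sup>2 \<le> (da * Nb)\<^sup>2" by simp
  then show ?thesis by (rule power2_le_imp_le) (use da Nb in simp)
qed

lemma cosine_le_of_cotangent_le:
  fixes Na Nb da db xa xb :: real
  assumes Na: "0 < Na" and Nb: "0 < Nb" and ea: "Na\<^sup>2 = da\<^sup>2 + xa\<^sup>2" and eb: "Nb\<^sup>2 = db\<^sup>2 + xb\<^sup>2"
    and nz: "xa \<noteq> 0 \<or> xb \<noteq> 0" and cot: "db * \<bar>xa\<bar> \<le> da * \<bar>xb\<bar>"
  shows "db / Nb \<le> da / Na"
proof -
  have "db * Na \<le> da * Nb"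
  proof (cases "0 < db")
    case True
    then show ?thesis by (rule cosine_le_of_cotangent_le_pos[OF assms])
  next
    case db: False
    show ?thesis
    proof (cases "0 \<le> da")
      case True
      have "db * Na \<le> 0" using db Na by (simp add: mult_nonpos_nonneg)
      moreover have "0 \<le> da * Nb" using True Nb by simp
      ultimately show ?thesis by linarith
    next
      case False
      have "(- da) * Nb \<le> (- db) * Na"
        using cosine_le_of_cotangent_le_pos[where Na = Nb and Nb = Na and da = "- db" and db = "- da"
            and xa = xb and xb = xa] Na Nb ea eb nz cot False
        by auto
      then show ?thesis by simp
    qed
  qed
  then have "db * Na / (Na * Nb) \<le> da * Nb / (Na * Nb)" using Na Nb by (intro divide_right_mono) auto
  then show ?thesis using Na Nb by simp
qed

definition vcos :: "real^2 \<Rightarrow> real^2 \<Rightarrow> real" where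
  "vcos u v = (u \<bullet> v) / (norm u * norm v)"

definition vsin :: "real^2 \<Rightarrow> real^2 \<Rightarrow> real" where
  "vsin u v = \<bar>cross2 u v\<bar> / (norm u * norm v)"

lemma vcos_commute: "vcos u v = vcos v u"
  by (simp add: vcos_def inner_commute mult.commute)

lemma vsin_nonneg: "0 \<le> vsin u v"
  by (simp add: vsin_def)

lemma vcos_sq_add_vsin_sq:
  assumes "u \<noteq> 0" "v \<noteq> 0"
  shows "(vcos u v)\<^sup>2 + (vsin u v)\<^sup>2 = 1"
proof -
  have "(u \<bullet> v)\<^sup>2 + (cross2 u v)\<^sup>2 = (norm u * norm v)\<^sup>2"
    using inner_sq_add_cross2_sq by (simp add: power_mult_distrib)
  moreover have "norm u * norm v \<noteq> 0" using assms by simp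
  ultimately show ?thesis unfolding vcos_def vsin_def by (simp add: power_divide field_simps)
qed

text \<open>The hypothesis says that \<open>w\<close> lies in the angle between \<open>u\<close> and \<open>v\<close>, so the two angles add up.\<close>
lemma vcos_add:
  assumes "u \<noteq> 0" "v \<noteq> 0" "w \<noteq> 0" and between: "cross2 w u * cross2 w v \<le> 0"
  shows "vcos u v = vcos u w * vcos w v - vsin u w * vsin w v"
proof -
  have "(u \<bullet> v) * (norm w)\<^sup>2 = (u \<bullet> w) * (w \<bullet> v) + cross2 w u * cross2 w v"
    unfolding norm_vec2_sq inner_vec2 cross2_def by (simp add: algebra_simps)
  also have "cross2 w u * cross2 w v = - (\<bar>cross2 u w\<bar> * \<bar>cross2 w v\<bar>)"
    using between cross2_simps(8)[of w u] by (simp add: abs_mult[symmetric] abs_of_nonpos)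
  finally have "(u \<bullet> v) * (norm w)\<^sup>2 = (u \<bullet> w) * (w \<bullet> v) - \<bar>cross2 u w\<bar> * \<bar>cross2 w v\<bar>"
    by simp
  moreover have "norm u \<noteq> 0" "norm v \<noteq> 0" "norm w \<noteq> 0" using assms by auto
  ultimately show ?thesis unfolding vcos_def vsin_def by (simp add: field_simps power2_eq_square)
qed

lemma abs_vcos_le_1: "\<bar>vcos u v\<bar> \<le> 1"
proof (cases "u = 0 \<or> v = 0")
  case True
  then show ?thesis by (auto simp: vcos_def)
next
  case False
  have "\<bar>u \<bullet> v\<bar> \<le> norm u * norm v" by (rule Cauchy_Schwarz_ineq2)
  then show ?thesis using False by (simp add: vcos_def abs_div divide_le_eq_1)
qed

lemma cos_vangle: "cos (vangle u v) = vcos u v"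
  unfolding vangle_def vcos_def[symmetric] using abs_vcos_le_1[of u v] by (simp add: abs_le_iff)

lemma vangle_bounds: "0 \<le> vangle u v" "vangle u v \<le> pi"
  unfolding vangle_def vcos_def[symmetric] using abs_vcos_le_1[of u v]
  by (simp_all add: arccos_lbound arccos_ubound abs_le_iff)

lemma vangle_commute: "vangle u v = vangle v u"
  by (simp add: vangle_def inner_commute mult.commute)

lemma angle3_commute: "angle3 A B C = angle3 C B A"
  by (simp add: angle3_def vangle_commute)

lemma vcos_le_cos_if_angle3_ge:
  assumes "\<theta> \<le> angle3 A B C" "0 \<le> \<theta>" "\<theta> \<le> pi"
  shows "vcos (A - B) (C - B) \<le> cos \<theta>"
proof -
  have "cos (angle3 A B C) \<le> cos \<theta>"
    using assms vangle_bounds[of "A - B" "C - B"] unfolding angle3_def by (subst cos_mono_le_eq) auto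
  then show ?thesis by (simp add: angle3_def cos_vangle)
qed

text \<open>Comparing two angles through their cotangents \<open>(u \<bullet> v) / \<bar>cross2 u v\<bar>\<close>,
  written without division.\<close>
lemma vcos_le_vcos_if_cot_le:
  assumes "u1 \<noteq> 0" "v1 \<noteq> 0" "u2 \<noteq> 0" "v2 \<noteq> 0" "cross2 u1 v1 \<noteq> 0 \<or> cross2 u2 v2 \<noteq> 0"
    and "(u2 \<bullet> v2) * \<bar>cross2 u1 v1\<bar> \<le> (u1 \<bullet> v1) * \<bar>cross2 u2 v2\<bar>"
  shows "vcos u2 v2 \<le> vcos u1 v1"
  unfolding vcos_def
  by (rule cosine_le_of_cotangent_le[where xa = "cross2 u1 v1" and xb = "cross2 u2 v2"])
    (use assms inner_sq_add_cross2_sq[of u1 v1] inner_sq_add_cross2_sq[of u2 v2]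
      in \<open>auto simp: power_mult_distrib\<close>)

subsection \<open>The effective visibility angle\<close>

lemma abs_pi_half_minus_eva:
  "\<bar>pi/2 - eva U A B C\<bar> =
     min \<bar>pi/2 - angle3 A U B\<bar> (min \<bar>pi/2 - angle3 A U C\<bar> \<bar>pi/2 - angle3 B U C\<bar>)"
  unfolding eva_def Let_def by (auto simp: min_def)

lemma abs_pi_half_minus_eva_permute:
  "\<bar>pi/2 - eva U A C B\<bar> = \<bar>pi/2 - eva U A B C\<bar>"
  "\<bar>pi/2 - eva U B C A\<bar> = \<bar>pi/2 - eva U A B C\<bar>"
  unfolding abs_pi_half_minus_eva angle3_commute[of C U B] angle3_commute[of C U A]
    angle3_commute[of B U A] by (simp_all add: min_def)

lemma abs_pi_half_minus_vangle_le:
  assumes "0 \<le> x" "x \<le> pi/2" and "\<bar>vcos u v\<bar> \<le> cos x"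
  shows "\<bar>pi/2 - vangle u v\<bar> \<le> pi/2 - x"
proof -
  have "cos (vangle u v) \<le> cos x" "cos (pi - x) \<le> cos (vangle u v)"
    using assms(3) by (simp_all add: cos_vangle)
  then have "x \<le> vangle u v" "vangle u v \<le> pi - x"
    using cos_mono_le_eq[of "vangle u v" x] cos_mono_le_eq[of "pi - x" "vangle u v"]
      assms(1,2) vangle_bounds[of u v] by simp_all
  then show ?thesis by (simp add: abs_le_iff)
qed

lemma eva_bound:
  assumes "0 \<le> x" "x \<le> pi/2"
    and "\<bar>vcos (A - U) (B - U)\<bar> \<le> cos x \<or> \<bar>vcos (A - U) (C - U)\<bar> \<le> cos x
      \<or> \<bar>vcos (B - U) (C - U)\<bar> \<le> cos x"
  shows "\<bar>pi/2 - eva U A B C\<bar> \<le> pi/2 - x"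
  using assms(3) abs_pi_half_minus_vangle_le[OF assms(1,2)]
  unfolding abs_pi_half_minus_eva angle3_def by fastforce

subsection \<open>User inside the triangle\<close>

text \<open>For \<open>U = \<alpha> A + \<beta> B + \<gamma> C\<close> the cross product \<open>cross2 (A - U) (B - U)\<close> is \<open>\<gamma>\<close> times the
  one at \<open>C\<close>, while the inner product falls short of \<open>\<gamma>\<close> times the one at \<open>C\<close>
  by a sum of squares; so the cotangent of the angle decreases.\<close>
lemma vcos_le_vcos_if_in_triangle:
  fixes A B C U :: "real^2"
  assumes ncol: "\<not> collinear {A, B, C}" and U: "U \<in> convex hull {A, B, C}"
    and "U \<noteq> A" "U \<noteq> B"
  shows "vcos (A - U) (B - U) \<le> vcos (A - C) (B - C)"
proof -
  obtain \<alpha> \<beta> \<gamma> where nonneg: "0 \<le> \<alpha>" "0 \<le> \<beta>" "0 \<le> \<gamma>" and sum: "\<alpha> + \<beta> + \<gamma> = 1"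
    and U_eq: "U = \<alpha> *\<^sub>R A + \<beta> *\<^sub>R B + \<gamma> *\<^sub>R C"
    using U unfolding convex_hull_3 by auto
  have \<gamma>: "\<gamma> = 1 - \<alpha> - \<beta>" using sum by simp
  have U1: "U$1 = \<alpha> * A$1 + \<beta> * B$1 + \<gamma> * C$1" and U2: "U$2 = \<alpha> * A$2 + \<beta> * B$2 + \<gamma> * C$2"
    using U_eq by simp_all
  have X: "cross2 (A - C) (B - C) \<noteq> 0" using cross2_ne_0_if_not_collinear[OF ncol] by simp
  have cross_U: "\<bar>cross2 (A - U) (B - U)\<bar> = \<gamma> * \<bar>cross2 (A - C) (B - C)\<bar>"
  proof -
    have "cross2 (A - U) (B - U) = \<gamma> * cross2 (A - C) (B - C)"
      unfolding cross2_def vector_minus_component U1 U2 unfolding \<gamma> by (simp add: algebra_simps)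
    then show ?thesis using nonneg by (simp add: abs_mult)
  qed
  have "\<gamma> * ((A - C) \<bullet> (B - C)) - (A - U) \<bullet> (B - U) =
      \<alpha> * \<beta> * (norm (A - B))\<^sup>2 + \<beta> * \<gamma> * (norm (B - C))\<^sup>2 + \<gamma> * \<alpha> * (norm (A - C))\<^sup>2"
    unfolding norm_vec2_sq inner_vec2 vector_minus_component U1 U2 unfolding \<gamma>
    by (simp add: algebra_simps)
  also have "\<dots> \<ge> 0" using nonneg by simp
  finally have "(A - U) \<bullet> (B - U) \<le> \<gamma> * ((A - C) \<bullet> (B - C))" by simp
  then have "((A - U) \<bullet> (B - U)) * \<bar>cross2 (A - C) (B - C)\<bar>
      \<le> \<gamma> * ((A - C) \<bullet> (B - C)) * \<bar>cross2 (A - C) (B - C)\<bar>"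
    by (rule mult_right_mono) simp
  then have "((A - U) \<bullet> (B - U)) * \<bar>cross2 (A - C) (B - C)\<bar>
      \<le> ((A - C) \<bullet> (B - C)) * \<bar>cross2 (A - U) (B - U)\<bar>"
    unfolding cross_U by (simp add: mult_ac)
  moreover have "A - C \<noteq> 0" "B - C \<noteq> 0" using X by (auto simp: cross2_def)
  ultimately show ?thesis using X assms(3,4) by (intro vcos_le_vcos_if_cot_le) auto
qed

lemma vcos_sum_ge:
  assumes "u \<noteq> 0" "v \<noteq> 0" "w \<noteq> 0"
  shows "- 3/2 \<le> vcos u v + vcos u w + vcos v w"
proof -
  define x y z where "x = u /\<^sub>R norm u" and "y = v /\<^sub>R norm v" and "z = w /\<^sub>R norm w"
  have unit: "x \<bullet> x = 1" "y \<bullet> y = 1" "z \<bullet> z = 1"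
    using assms by (simp_all add: x_def y_def z_def dot_square_norm power2_eq_square)
  have "vcos u v = x \<bullet> y" "vcos u w = x \<bullet> z" "vcos v w = y \<bullet> z"
    by (simp_all add: vcos_def x_def y_def z_def field_simps)
  moreover have "0 \<le> (x + y + z) \<bullet> (x + y + z)" by simp
  moreover have "(x + y + z) \<bullet> (x + y + z) = x \<bullet> x + y \<bullet> y + z \<bullet> z + 2 * (x \<bullet> y + x \<bullet> z + y \<bullet> z)"
    by (simp add: inner_add_left inner_add_right inner_commute algebra_simps)
  ultimately show ?thesis using unit by simp
qed

lemma eva_bound_inside_triangle:
  fixes A B C U :: "real^2"
  assumes ncol: "\<not> collinear {A, B, C}" and U: "U \<in> convex hull {A, B, C}" "U \<notin> {A, B, C}"
    and \<theta>: "0 \<le> \<theta>" "\<theta> \<le> pi/3"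
    and angles: "\<theta> \<le> angle3 B A C" "\<theta> \<le> angle3 A B C" "\<theta> \<le> angle3 A C B"
  shows "\<bar>pi/2 - eva U A B C\<bar> \<le> pi/2 - \<theta>"
proof -
  have "cos (pi/3) \<le> cos \<theta>" using \<theta> by (subst cos_mono_le_eq) auto
  then have cos_ge: "1/2 \<le> cos \<theta>" by (simp add: cos_60)
  have U_ne: "U \<noteq> A" "U \<noteq> B" "U \<noteq> C" using U by auto
  have hull_perm: "convex hull {A, B, C} = convex hull {A, C, B}"
    "convex hull {A, B, C} = convex hull {B, C, A}"
    by (simp_all add: insert_commute)
  have ncol_perm: "\<not> collinear {A, C, B}" "\<not> collinear {B, C, A}"
    using ncol by (simp_all add: insert_commute)
  have "vcos (A - U) (B - U) \<le> cos \<theta>"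
    using vcos_le_vcos_if_in_triangle[OF ncol U(1) U_ne(1,2)]
      vcos_le_cos_if_angle3_ge[OF angles(3)] \<theta> by simp
  moreover have "vcos (A - U) (C - U) \<le> cos \<theta>"
    using vcos_le_vcos_if_in_triangle[OF ncol_perm(1) U(1)[unfolded hull_perm(1)] U_ne(1,3)]
      vcos_le_cos_if_angle3_ge[OF angles(2)] \<theta> by simp
  moreover have "vcos (B - U) (C - U) \<le> cos \<theta>"
    using vcos_le_vcos_if_in_triangle[OF ncol_perm(2) U(1)[unfolded hull_perm(2)] U_ne(2,3)]
      vcos_le_cos_if_angle3_ge[OF angles(1)] \<theta> by simp
  moreover have "- 3/2 \<le> vcos (A - U) (B - U) + vcos (A - U) (C - U) + vcos (B - U) (C - U)"
    using U_ne by (intro vcos_sum_ge) auto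
  ultimately have "\<bar>vcos (A - U) (B - U)\<bar> \<le> cos \<theta> \<or> \<bar>vcos (A - U) (C - U)\<bar> \<le> cos \<theta>
      \<or> \<bar>vcos (B - U) (C - U)\<bar> \<le> cos \<theta>"
    using cos_ge by linarith
  then show ?thesis using \<theta> by (intro eva_bound) auto
qed

subsection \<open>User outside the triangle\<close>

text \<open>With the apex at the origin and \<open>e3\<close> inside the angle between \<open>e1\<close> and \<open>e2\<close>, the angle
  between \<open>e1\<close> and \<open>e3\<close> is at most \<open>pi\<close> minus the angle of the triangle \<open>e1 e2 e3\<close> at \<open>e1\<close>.\<close>
lemma vcos_cone_ge_neg_vcos_vertex:
  fixes e1 e2 :: "real^2" and \<mu> \<nu> :: real
  defines "e3 \<equiv> \<mu> *\<^sub>R e1 + \<nu> *\<^sub>R e2"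
  assumes e1: "e1 \<noteq> 0" and e3: "e3 \<noteq> 0" and \<mu>: "0 \<le> \<mu>" and \<nu>: "0 \<le> \<nu>"
    and X: "cross2 (e2 - e1) (e3 - e1) \<noteq> 0"
  shows "- vcos (e2 - e1) (e3 - e1) \<le> vcos e1 e3"
proof -
  define s m where "s = 1 - \<mu> - \<nu>" and "m = (e2 - e1) \<bullet> (e3 - e1)"
  have c3: "e3$1 = \<mu> * e1$1 + \<nu> * e2$1" "e3$2 = \<mu> * e1$2 + \<nu> * e2$2" by (simp_all add: e3_def)
  have cross_13: "cross2 e1 e3 = \<nu> * cross2 e1 e2"
    unfolding cross2_def c3 by (simp add: algebra_simps)
  have cross_X: "cross2 (e1 - e2) (e3 - e1) = - (s * cross2 e1 e2)"
    unfolding cross2_def vector_minus_component c3 s_def by (simp add: algebra_simps)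
  have nonneg: "0 \<le> (e1 \<bullet> e3) * \<bar>s\<bar> + \<nu> * m"
  proof (cases "0 \<le> s")
    case True
    have "(e1 \<bullet> e3) * s + \<nu> * m = s * (1 - s) * (norm e1)\<^sup>2 + \<nu>\<^sup>2 * (norm (e2 - e1))\<^sup>2"
      unfolding m_def norm_vec2_sq inner_vec2 vector_minus_component c3 s_def
      by (simp add: algebra_simps power2_eq_square)
    moreover have "0 \<le> s * (1 - s)" using True \<mu> \<nu> s_def by simp
    ultimately show ?thesis using True by simp
  next
    case False
    have "(e1 \<bullet> e3) * (- s) + \<nu> * m = (norm (e3 - e1))\<^sup>2 - s * (norm e1)\<^sup>2"
      unfolding m_def norm_vec2_sq inner_vec2 vector_minus_component c3 s_def
      by (simp add: algebra_simps)
    moreover have "0 \<le> - s * (norm e1)\<^sup>2" using False by (simp add: mult_nonpos_nonneg)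
    moreover have "\<bar>s\<bar> = - s" using False by simp
    ultimately show ?thesis using zero_le_power2[of "norm (e3 - e1)"] by (simp only:)
  qed
  have "(e1 \<bullet> e3) * \<bar>cross2 (e1 - e2) (e3 - e1)\<bar> - ((e1 - e2) \<bullet> (e3 - e1)) * \<bar>cross2 e1 e3\<bar>
      = \<bar>cross2 e1 e2\<bar> * ((e1 \<bullet> e3) * \<bar>s\<bar> + \<nu> * m)"
    unfolding cross_X cross_13 m_def using \<nu> by (simp add: abs_mult inner_diff_left algebra_simps)
  also have "\<dots> \<ge> 0" using nonneg by simp
  finally have cot: "((e1 - e2) \<bullet> (e3 - e1)) * \<bar>cross2 e1 e3\<bar> \<le> (e1 \<bullet> e3) * \<bar>cross2 (e1 - e2) (e3 - e1)\<bar>"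
    by simp
  have "e1 - e2 \<noteq> 0" "e3 - e1 \<noteq> 0" using X by (auto simp: cross2_def)
  then have "vcos (e1 - e2) (e3 - e1) \<le> vcos e1 e3"
    using e1 e3 X cot cross2_simps(3)[of e1 e2 "e3 - e1"] cross2_simps(3)[of e2 e1 "e3 - e1"]
    by (intro vcos_le_vcos_if_cot_le) auto
  moreover have "vcos (e1 - e2) (e3 - e1) = - vcos (e2 - e1) (e3 - e1)"
    using norm_minus_commute[of e1 e2] by (simp add: vcos_def inner_diff_left minus_divide_left)
  ultimately show ?thesis by simp
qed

text \<open>With \<open>m = B cos \<alpha>\<close>, \<open>X = B sin \<alpha>\<close>, \<open>k = cos \<theta>\<close> and \<open>T = tan (\<theta>/2)\<close> this reads
  \<open>tan (\<theta>/2) \<le> sin \<alpha> / (1 + cos \<alpha>) = tan (\<alpha>/2)\<close> for \<open>\<theta> \<le> \<alpha>\<close>.\<close>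
lemma one_plus_cos_mult_tan_half_le_sin:
  fixes B m X T k :: real
  assumes B: "0 < B" and m: "m \<le> k * B" and pyth: "m\<^sup>2 + X\<^sup>2 = B\<^sup>2" and X: "0 \<le> X"
    and T: "0 \<le> T" and Tk: "T\<^sup>2 * (1 + k) = 1 - k" and k: "-1 < k"
  shows "(B + m) * T \<le> X"
proof -
  have "m\<^sup>2 \<le> B\<^sup>2" using pyth by (metis le_add_same_cancel1 zero_le_power2)
  then have "\<bar>m\<bar> \<le> B" using B by (simp add: abs_le_square_iff[symmetric] abs_of_pos)
  then have Bm: "0 \<le> B + m" by linarith
  have h: "(B + m) * (1 - k) \<le> (B - m) * (1 + k)" using m by (simp add: algebra_simps)
  have "((B + m) * T)\<^sup>2 * (1 + k) = (B + m) * ((B + m) * (T\<^sup>2 * (1 + k)))"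
    by (simp add: power_mult_distrib power2_eq_square mult_ac)
  also have "\<dots> \<le> (B + m) * ((B - m) * (1 + k))"
    unfolding Tk using mult_left_mono[OF h Bm] .
  also have "\<dots> = (B\<^sup>2 - m\<^sup>2) * (1 + k)" by (simp add: power2_eq_square algebra_simps)
  also have "\<dots> = X\<^sup>2 * (1 + k)" using pyth by simp
  finally have "((B + m) * T)\<^sup>2 \<le> X\<^sup>2" using k by simp
  then show ?thesis using X by (rule power2_le_imp_le)
qed

text \<open>\<open>\<bar>cross2 (B - A) (C - A)\<bar>\<close> divided by the perimeter is the inradius, so this says that the
  inradius is at least \<open>T \<cdot> \<bar>AB\<bar> / 2\<close>; it follows from \<open>\<rho> = (s - a) tan (\<alpha>/2)\<close> at the two
  endpoints of \<open>AB\<close>.\<close>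
lemma tan_half_side_perimeter_le_cross2:
  fixes A B C :: "real^2"
  assumes X: "cross2 (B - A) (C - A) \<noteq> 0"
    and angle_A: "vcos (B - A) (C - A) \<le> k" and angle_B: "vcos (A - B) (C - B) \<le> k"
    and T: "0 \<le> T" and Tk: "T\<^sup>2 * (1 + k) = 1 - k" and k: "-1 < k"
  shows "T * norm (B - A) * (norm (C - B) + norm (C - A) + norm (B - A))
    \<le> 2 * \<bar>cross2 (B - A) (C - A)\<bar>"
proof -
  define a b c where "a = norm (C - B)" and "b = norm (C - A)" and "c = norm (B - A)"
  define Xa where "Xa = \<bar>cross2 (B - A) (C - A)\<bar>"
  have "B - A \<noteq> 0" "C - A \<noteq> 0" "C - B \<noteq> 0" using X by (auto simp: cross2_def)
  then have pos: "0 < c * b" "0 < c * a" by (simp_all add: a_def b_def c_def)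
  have at_A: "(c * b + (B - A) \<bullet> (C - A)) * T \<le> Xa"
  proof (rule one_plus_cos_mult_tan_half_le_sin[OF pos(1) _ _ _ T Tk k])
    show "(B - A) \<bullet> (C - A) \<le> k * (c * b)"
      using angle_A pos by (simp add: vcos_def c_def b_def divide_le_eq)
    show "((B - A) \<bullet> (C - A))\<^sup>2 + Xa\<^sup>2 = (c * b)\<^sup>2"
      using inner_sq_add_cross2_sq[of "B - A" "C - A"]
      by (simp add: Xa_def c_def b_def power_mult_distrib)
  qed (simp add: Xa_def)
  have cross_B: "cross2 (A - B) (C - B) = - cross2 (B - A) (C - A)"
    by (simp add: cross2_def algebra_simps)
  have at_B: "(c * a + (A - B) \<bullet> (C - B)) * T \<le> Xa"
  proof (rule one_plus_cos_mult_tan_half_le_sin[OF pos(2) _ _ _ T Tk k])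
    show "(A - B) \<bullet> (C - B) \<le> k * (c * a)"
      using angle_B pos by (simp add: vcos_def c_def a_def divide_le_eq norm_minus_commute)
    show "((A - B) \<bullet> (C - B))\<^sup>2 + Xa\<^sup>2 = (c * a)\<^sup>2"
      using inner_sq_add_cross2_sq[of "A - B" "C - B"] cross_B
      by (simp add: Xa_def c_def a_def power_mult_distrib norm_minus_commute)
  qed (simp add: Xa_def)
  define mA mB where "mA = (B - A) \<bullet> (C - A)" and "mB = (A - B) \<bullet> (C - B)"
  have sum: "mA + mB = c\<^sup>2"
    unfolding mA_def mB_def c_def norm_vec2_sq inner_vec2 by (simp add: algebra_simps)
  have "(c * b + mA) * T + (c * a + mB) * T = T * (c * b + c * a + (mA + mB))"
    by (simp add: algebra_simps)
  also have "\<dots> = T * c * (a + b + c)"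
    unfolding sum by (simp add: power2_eq_square algebra_simps)
  finally show ?thesis using at_A at_B unfolding mA_def mB_def a_def b_def c_def Xa_def by linarith
qed

text \<open>Up to the factor of the perimeter, the combination on the right is the incenter of the
  triangle \<open>e1 e2 e3\<close>; the inequality says that it is at least the inradius away from the line
  through the origin and \<open>e1\<close>.\<close>
lemma incenter_far_from_line:
  fixes e1 e2 e3 :: "real^2" and \<mu> \<nu> :: real
  assumes e3: "e3 = \<mu> *\<^sub>R e1 + \<nu> *\<^sub>R e2" and \<mu>: "0 \<le> \<mu>" and \<nu>: "0 \<le> \<nu>"
  shows "norm e1 * \<bar>cross2 (e2 - e1) (e3 - e1)\<bar>
    \<le> \<bar>cross2 e1 (norm (e3 - e2) *\<^sub>R e1 + norm (e3 - e1) *\<^sub>R e2 + norm (e2 - e1) *\<^sub>R e3)\<bar>"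
proof -
  define x where "x = cross2 e1 e2"
  have c3: "e3$1 = \<mu> * e1$1 + \<nu> * e2$1" "e3$2 = \<mu> * e1$2 + \<nu> * e2$2" by (simp_all add: e3)
  have "norm e1 * \<bar>cross2 (e2 - e1) (e3 - e1)\<bar>
      \<le> \<bar>cross2 e1 (e3 - e1)\<bar> * norm (e2 - e1) + \<bar>cross2 e1 (e2 - e1)\<bar> * norm (e3 - e1)"
    by (rule norm_mult_abs_cross2_le)
  also have "\<dots> = (norm (e3 - e1) + norm (e2 - e1) * \<nu>) * \<bar>x\<bar>"
  proof -
    have "cross2 e1 (e3 - e1) = \<nu> * x" "cross2 e1 (e2 - e1) = x"
      unfolding cross2_def x_def by (simp_all add: c3 algebra_simps)
    then show ?thesis using \<nu> by (simp add: abs_mult algebra_simps)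
  qed
  also have "\<dots> = \<bar>cross2 e1 (norm (e3 - e2) *\<^sub>R e1 + norm (e3 - e1) *\<^sub>R e2 + norm (e2 - e1) *\<^sub>R e3)\<bar>"
  proof -
    have "cross2 e1 (norm (e3 - e2) *\<^sub>R e1 + norm (e3 - e1) *\<^sub>R e2 + norm (e2 - e1) *\<^sub>R e3)
        = (norm (e3 - e1) + norm (e2 - e1) * \<nu>) * x"
      unfolding cross2_def x_def by (simp add: c3 algebra_simps)
    then show ?thesis using \<nu> by (simp add: abs_mult)
  qed
  finally show ?thesis .
qed

lemma cross2_cone_combination_sign:
  fixes e1 e2 :: "real^2" and \<mu> \<nu> a b c :: real
  assumes "0 \<le> \<mu>" "0 \<le> \<nu>" "0 \<le> a" "0 \<le> b" "0 \<le> c"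
  defines "w \<equiv> a *\<^sub>R e1 + b *\<^sub>R e2 + c *\<^sub>R (\<mu> *\<^sub>R e1 + \<nu> *\<^sub>R e2)"
  shows "cross2 w e1 * cross2 w e2 \<le> 0"
proof -
  have "cross2 w e1 * cross2 w e2 = - ((b + c * \<nu>) * (a + c * \<mu>) * (cross2 e1 e2)\<^sup>2)"
    unfolding w_def cross2_def by (simp add: power2_eq_square algebra_simps)
  moreover have "0 \<le> (b + c * \<nu>) * (a + c * \<mu>) * (cross2 e1 e2)\<^sup>2" using assms by simp
  ultimately show ?thesis by linarith
qed

lemma norm_scaleR_add3_le:
  fixes x y z :: "'a::real_normed_vector"
  assumes "0 \<le> a" "0 \<le> b" "0 \<le> c" "norm x \<le> r" "norm y \<le> r" "norm z \<le> r"
  shows "norm (a *\<^sub>R x + b *\<^sub>R y + c *\<^sub>R z) \<le> (a + b + c) * r"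
proof -
  have "norm (a *\<^sub>R x + b *\<^sub>R y + c *\<^sub>R z) \<le> a * norm x + b * norm y + c * norm z"
    using norm_triangle_ineq[of "a *\<^sub>R x + b *\<^sub>R y" "c *\<^sub>R z"] norm_triangle_ineq[of "a *\<^sub>R x" "b *\<^sub>R y"]
      assms(1-3) by simp
  also have "\<dots> \<le> (a + b + c) * r"
    using assms by (simp add: distrib_right add_mono mult_left_mono)
  finally show ?thesis .
qed

lemma cos_add_le_one_minus_two_sq:
  fixes c1 c2 s1 s2 t :: real
  assumes "c1\<^sup>2 + s1\<^sup>2 = 1" "c2\<^sup>2 + s2\<^sup>2 = 1" "t \<le> s1" "t \<le> s2" "0 \<le> t"
  shows "c1 * c2 - s1 * s2 \<le> 1 - 2 * t\<^sup>2"
proof -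
  have "0 \<le> (c1 - c2)\<^sup>2" by simp
  then have "c1 * c2 \<le> (c1\<^sup>2 + c2\<^sup>2) / 2" by (simp add: power2_eq_square algebra_simps)
  moreover have "(2 * t)\<^sup>2 \<le> (s1 + s2)\<^sup>2" using assms by (intro power_mono) auto
  ultimately show ?thesis using assms by (simp add: power2_eq_square algebra_simps)
qed

text \<open>The angle between \<open>e1\<close> and \<open>e2\<close> is split by the incenter \<open>I\<close> into two angles whose sines
  are at least \<open>\<rho> / \<bar>I\<bar> \<ge> (ds T / 2) / r\<close>, where \<open>\<rho>\<close> is the inradius and \<open>\<bar>I\<bar> \<le> r\<close> because
  \<open>I\<close> is a convex combination of the vertices.\<close>
lemma vcos_cone_le_one_minus_two_sq:
  fixes e1 e2 :: "real^2" and \<mu> \<nu> r ds k T :: real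
  defines "e3 \<equiv> \<mu> *\<^sub>R e1 + \<nu> *\<^sub>R e2"
  assumes e1: "e1 \<noteq> 0" and e2: "e2 \<noteq> 0" and \<mu>: "0 \<le> \<mu>" and \<nu>: "0 \<le> \<nu>"
    and X: "cross2 (e2 - e1) (e3 - e1) \<noteq> 0"
    and r: "0 < r" "norm e1 \<le> r" "norm e2 \<le> r" "norm e3 \<le> r"
    and ds: "0 \<le> ds" "ds \<le> norm (e2 - e1)"
    and angle_1: "vcos (e2 - e1) (e3 - e1) \<le> k" and angle_2: "vcos (e1 - e2) (e3 - e2) \<le> k"
    and T: "0 \<le> T" and Tk: "T\<^sup>2 * (1 + k) = 1 - k" and k: "-1 < k"
  shows "vcos e1 e2 \<le> 1 - 2 * (ds * T / (2 * r))\<^sup>2"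
proof -
  define a b c where "a = norm (e3 - e2)" and "b = norm (e3 - e1)" and "c = norm (e2 - e1)"
  define eI where "eI = a *\<^sub>R e1 + b *\<^sub>R e2 + c *\<^sub>R e3"
  define Xa where "Xa = \<bar>cross2 (e2 - e1) (e3 - e1)\<bar>"
  define t where "t = ds * T / (2 * r)"
  have abc: "0 \<le> a" "0 \<le> b" "0 \<le> c" by (simp_all add: a_def b_def c_def)
  have near_1: "norm e1 * Xa \<le> \<bar>cross2 e1 eI\<bar>"
    using incenter_far_from_line[OF e3_def[THEN meta_eq_to_obj_eq] \<mu> \<nu>]
    unfolding eI_def a_def b_def c_def Xa_def .
  have "norm e2 * \<bar>cross2 (e1 - e2) (e3 - e2)\<bar>
      \<le> \<bar>cross2 e2 (norm (e3 - e1) *\<^sub>R e2 + norm (e3 - e2) *\<^sub>R e1 + norm (e1 - e2) *\<^sub>R e3)\<bar>"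
    using \<mu> \<nu> by (intro incenter_far_from_line[where \<mu> = \<nu> and \<nu> = \<mu>]) (simp add: e3_def add.commute)
  moreover have "cross2 (e1 - e2) (e3 - e2) = - cross2 (e2 - e1) (e3 - e1)"
    by (simp add: cross2_def algebra_simps)
  moreover have "\<bar>cross2 e2 eI\<bar> = \<bar>cross2 eI e2\<bar>" using cross2_simps(8)[of e2 eI] by simp
  ultimately have near_2: "norm e2 * Xa \<le> \<bar>cross2 eI e2\<bar>"
    by (simp add: eI_def a_def b_def c_def Xa_def norm_minus_commute add.commute)
  have between: "cross2 eI e1 * cross2 eI e2 \<le> 0"
    unfolding eI_def e3_def using \<mu> \<nu> abc by (rule cross2_cone_combination_sign)
  have t: "0 \<le> t" using ds T r by (simp add: t_def)
  have "t * norm eI \<le> t * ((a + b + c) * r)"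
    unfolding eI_def using t abc r by (intro mult_left_mono norm_scaleR_add3_le) auto
  also have "\<dots> = ds * T * (a + b + c) / 2" using r by (simp add: t_def field_simps)
  also have "\<dots> \<le> c * T * (a + b + c) / 2"
    using ds T abc by (intro divide_right_mono mult_right_mono) (auto simp: c_def)
  also have "\<dots> \<le> Xa"
    using tan_half_side_perimeter_le_cross2[OF X angle_1 angle_2 T Tk k]
    by (simp add: a_def b_def c_def Xa_def algebra_simps)
  finally have key: "t * norm eI \<le> Xa" .
  have "0 < norm e1 * Xa" using X e1 by (simp add: Xa_def)
  then have eI: "eI \<noteq> 0" using near_1 by (auto simp: cross2_def)
  have "t * (norm e1 * norm eI) \<le> \<bar>cross2 e1 eI\<bar>"
    using mult_left_mono[OF key norm_ge_zero[of e1]] near_1 by (simp add: algebra_simps)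
  then have sin_1: "t \<le> vsin e1 eI" using e1 eI by (simp add: vsin_def pos_le_divide_eq)
  have "t * (norm eI * norm e2) \<le> \<bar>cross2 eI e2\<bar>"
    using mult_left_mono[OF key norm_ge_zero[of e2]] near_2 by (simp add: algebra_simps)
  then have sin_2: "t \<le> vsin eI e2" using e2 eI by (simp add: vsin_def pos_le_divide_eq)
  have "vcos e1 e2 = vcos e1 eI * vcos eI e2 - vsin e1 eI * vsin eI e2"
    using e1 e2 eI between by (rule vcos_add)
  also have "\<dots> \<le> 1 - 2 * t\<^sup>2"
    using vcos_sq_add_vsin_sq[OF e1 eI] vcos_sq_add_vsin_sq[OF eI e2] sin_1 sin_2 t
    by (rule cos_add_le_one_minus_two_sq)
  finally show ?thesis by (simp add: t_def)
qed

lemma cos_add_ge_neg_if_cos_gt: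
  fixes c1 c2 s1 s2 K :: real
  assumes c1: "K < c1" and c2: "K < c2" and K: "1/2 \<le> K" "K \<le> 1"
    and unit: "c1\<^sup>2 + s1\<^sup>2 = 1" "c2\<^sup>2 + s2\<^sup>2 = 1" and s: "0 \<le> s1" "0 \<le> s2"
  shows "- K \<le> c1 * c2 - s1 * s2"
proof -
  have "K\<^sup>2 \<le> c1\<^sup>2" "K\<^sup>2 \<le> c2\<^sup>2" using c1 c2 K by (auto intro: power_mono)
  then have "s1\<^sup>2 \<le> 1 - K\<^sup>2" "s2\<^sup>2 \<le> 1 - K\<^sup>2" using unit by linarith+
  moreover have K2: "0 \<le> 1 - K\<^sup>2" using K by (simp add: power_le_one)
  ultimately have "(s1 * s2)\<^sup>2 \<le> (1 - K\<^sup>2)\<^sup>2"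
    unfolding power_mult_distrib power2_eq_square[of "1 - K\<^sup>2"] by (intro mult_mono) auto
  then have "s1 * s2 \<le> 1 - K\<^sup>2" using K2 by (rule power2_le_imp_le)
  moreover have "K * K \<le> c1 * c2" using c1 c2 K by (intro mult_mono) auto
  moreover have "0 \<le> (2 * K - 1) * (K + 1)" using K by simp
  ultimately show ?thesis by (simp add: power2_eq_square algebra_simps)
qed

lemma cos_two_arctan: "cos (2 * arctan t) = (1 - t\<^sup>2) / (1 + t\<^sup>2)"
proof -
  have "(sqrt (1 + t\<^sup>2))\<^sup>2 = 1 + t\<^sup>2" by (simp add: add_nonneg_nonneg)
  then have "cos (2 * arctan t) = 1 / (1 + t\<^sup>2) - t\<^sup>2 / (1 + t\<^sup>2)"
    by (simp add: cos_double cos_arctan sin_arctan power_divide)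
  then show ?thesis by (simp add: diff_divide_distrib)
qed

lemma cos_two_arctan_lower_bounds:
  assumes t: "0 \<le> t" "t \<le> T" and Tk: "T\<^sup>2 * (1 + k) = 1 - k" and k: "-1 < k"
  shows "k \<le> cos (2 * arctan t)" "1 - 2 * t\<^sup>2 \<le> cos (2 * arctan t)"
proof -
  have pos: "0 < 1 + t\<^sup>2" by (simp add: add_pos_nonneg)
  have "t\<^sup>2 \<le> T\<^sup>2" using t by (intro power_mono) auto
  then have "k * (1 + t\<^sup>2) \<le> 1 - t\<^sup>2"
    using k Tk mult_left_mono[of "t\<^sup>2" "T\<^sup>2" "1 + k"] by (simp add: algebra_simps)
  then show "k \<le> cos (2 * arctan t)"
    using pos by (simp add: cos_two_arctan pos_le_divide_eq)
  have "(1 - 2 * t\<^sup>2) * (1 + t\<^sup>2) \<le> 1 - t\<^sup>2"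
    using t by (simp add: algebra_simps power2_eq_square)
  then show "1 - 2 * t\<^sup>2 \<le> cos (2 * arctan t)"
    using pos by (simp add: cos_two_arctan pos_le_divide_eq)
qed

lemma vcos_cone_parts_not_both_gt:
  fixes u v :: "real^2" and \<mu> \<nu> K :: real
  defines "w \<equiv> \<mu> *\<^sub>R u + \<nu> *\<^sub>R v"
  assumes u: "u \<noteq> 0" and v: "v \<noteq> 0" and w: "w \<noteq> 0" and \<mu>: "0 \<le> \<mu>" and \<nu>: "0 \<le> \<nu>"
    and K: "1/2 \<le> K" "K \<le> 1" and wide: "vcos u v < - K"
  shows "\<not> (K < vcos u w \<and> K < vcos w v)"
proof
  assume small: "K < vcos u w \<and> K < vcos w v"
  have "cross2 w u * cross2 w v = - (\<mu> * \<nu> * (cross2 u v)\<^sup>2)"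
    unfolding w_def cross2_def by (simp add: power2_eq_square algebra_simps)
  also have "\<dots> \<le> 0" using \<mu> \<nu> by simp
  finally have "vcos u v = vcos u w * vcos w v - vsin u w * vsin w v"
    using u v w by (intro vcos_add)
  also have "\<dots> \<ge> - K"
    using small K by (intro cos_add_ge_neg_if_cos_gt vcos_sq_add_vsin_sq u v w vsin_nonneg) auto
  finally show False using wide by simp
qed

lemma abs_vcos_le_in_cone:
  fixes e1 e2 :: "real^2" and \<mu> \<nu> r ds k T :: real
  defines "e3 \<equiv> \<mu> *\<^sub>R e1 + \<nu> *\<^sub>R e2" and "t \<equiv> ds * T / (2 * r)"
  assumes e1: "e1 \<noteq> 0" and e2: "e2 \<noteq> 0" and e3: "e3 \<noteq> 0" and \<mu>: "0 \<le> \<mu>" and \<nu>: "0 \<le> \<nu>"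
    and X: "cross2 (e2 - e1) (e3 - e1) \<noteq> 0"
    and r: "0 < r" "norm e1 \<le> r" "norm e2 \<le> r" "norm e3 \<le> r"
    and ds: "0 \<le> ds" "ds \<le> norm (e2 - e1)" "ds \<le> 2 * r"
    and angle_1: "vcos (e2 - e1) (e3 - e1) \<le> k" and angle_2: "vcos (e1 - e2) (e3 - e2) \<le> k"
    and T: "0 \<le> T" and Tk: "T\<^sup>2 * (1 + k) = 1 - k" and k: "1/2 \<le> k"
  shows "\<bar>vcos e1 e2\<bar> \<le> cos (2 * arctan t) \<or> \<bar>vcos e1 e3\<bar> \<le> cos (2 * arctan t)
    \<or> \<bar>vcos e2 e3\<bar> \<le> cos (2 * arctan t)"
proof -
  define K where "K = cos (2 * arctan t)"
  have t: "0 \<le> t" "t \<le> T"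
    using ds T r mult_right_mono[OF ds(3) T] by (simp_all add: t_def divide_le_eq mult.commute)
  have kK: "k \<le> K" and tK: "1 - 2 * t\<^sup>2 \<le> K"
    using cos_two_arctan_lower_bounds[OF t Tk] k by (simp_all add: K_def)
  have "vcos e1 e2 \<le> 1 - 2 * t\<^sup>2"
    using vcos_cone_le_one_minus_two_sq[of e1 e2 \<mu> \<nu> r ds k T] assms k
    by (simp add: e3_def t_def)
  show ?thesis
  proof (cases "- K \<le> vcos e1 e2")
    case True
    then show ?thesis using \<open>vcos e1 e2 \<le> 1 - 2 * t\<^sup>2\<close> tK by (auto simp: K_def)
  next
    case False
    have "- k \<le> vcos e1 e3"
      using vcos_cone_ge_neg_vcos_vertex[of e1 \<mu> \<nu> e2] e1 e3 \<mu> \<nu> X angle_1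
      by (simp add: e3_def)
    have e3': "e3 = \<nu> *\<^sub>R e2 + \<mu> *\<^sub>R e1" by (simp add: e3_def add.commute)
    have "cross2 (e1 - e2) (e3 - e2) \<noteq> 0" using X by (simp add: cross2_def algebra_simps)
    then have "- k \<le> vcos e2 e3"
      using vcos_cone_ge_neg_vcos_vertex[of e2 \<nu> \<mu> e1] e2 e3 \<mu> \<nu> angle_2
      unfolding e3'[symmetric] by simp
    moreover have "\<not> (K < vcos e1 e3 \<and> K < vcos e3 e2)"
      using vcos_cone_parts_not_both_gt[where u = e1 and v = e2 and \<mu> = \<mu> and \<nu> = \<nu> and K = K] e1 e2 e3 \<mu> \<nu> kK k False
        cos_le_one[of "2 * arctan t"]
      by (simp add: e3_def K_def)
    ultimately show ?thesis
      using \<open>- k \<le> vcos e1 e3\<close> kK by (auto simp: K_def vcos_commute[of e3 e2])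
  qed
qed

lemma barycentric_coords_cross2:
  fixes A B C U :: "real^2"
  assumes X: "cross2 (B - A) (C - A) \<noteq> 0"
  defines "\<alpha> \<equiv> cross2 (B - U) (C - U) / cross2 (B - A) (C - A)"
    and "\<beta> \<equiv> cross2 (C - U) (A - U) / cross2 (B - A) (C - A)"
    and "\<gamma> \<equiv> cross2 (A - U) (B - U) / cross2 (B - A) (C - A)"
  shows "\<alpha> + \<beta> + \<gamma> = 1" "U = \<alpha> *\<^sub>R A + \<beta> *\<^sub>R B + \<gamma> *\<^sub>R C"
    "\<alpha> *\<^sub>R (A - U) + \<beta> *\<^sub>R (B - U) + \<gamma> *\<^sub>R (C - U) = 0"
proof -
  have "cross2 (B - U) (C - U) + cross2 (C - U) (A - U) + cross2 (A - U) (B - U) = cross2 (B - A) (C - A)"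
    by (simp add: cross2_def algebra_simps)
  then show sum: "\<alpha> + \<beta> + \<gamma> = 1"
    using X unfolding \<alpha>_def \<beta>_def \<gamma>_def by (simp add: add_divide_distrib[symmetric])
  have "cross2 (B - U) (C - U) *\<^sub>R (A - U) + cross2 (C - U) (A - U) *\<^sub>R (B - U)
      + cross2 (A - U) (B - U) *\<^sub>R (C - U) = 0"
    by (simp add: vec_eq_iff forall_2 cross2_def algebra_simps)
  then have "(1 / cross2 (B - A) (C - A)) *\<^sub>R (cross2 (B - U) (C - U) *\<^sub>R (A - U)
      + cross2 (C - U) (A - U) *\<^sub>R (B - U) + cross2 (A - U) (B - U) *\<^sub>R (C - U)) = 0"
    by simp
  then show zero: "\<alpha> *\<^sub>R (A - U) + \<beta> *\<^sub>R (B - U) + \<gamma> *\<^sub>R (C - U) = 0"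
    unfolding \<alpha>_def \<beta>_def \<gamma>_def by (simp add: scaleR_add_right)
  have "\<alpha> *\<^sub>R A + \<beta> *\<^sub>R B + \<gamma> *\<^sub>R C
      = (\<alpha> *\<^sub>R (A - U) + \<beta> *\<^sub>R (B - U) + \<gamma> *\<^sub>R (C - U)) + (\<alpha> + \<beta> + \<gamma>) *\<^sub>R U"
    by (simp add: algebra_simps)
  then show "U = \<alpha> *\<^sub>R A + \<beta> *\<^sub>R B + \<gamma> *\<^sub>R C" using zero sum by simp
qed

lemma cone_if_barycentric_signs:
  fixes A B C U :: "real^2" and \<alpha> \<beta> \<gamma> :: real
  assumes zero: "\<alpha> *\<^sub>R (A - U) + \<beta> *\<^sub>R (B - U) + \<gamma> *\<^sub>R (C - U) = 0" and sum: "\<alpha> + \<beta> + \<gamma> = 1"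
    and signs: "(\<gamma> < 0 \<and> 0 \<le> \<alpha> \<and> 0 \<le> \<beta>) \<or> (\<alpha> < 0 \<and> \<beta> < 0)"
  shows "C - U = (- \<alpha> / \<gamma>) *\<^sub>R (A - U) + (- \<beta> / \<gamma>) *\<^sub>R (B - U)" "0 \<le> - \<alpha> / \<gamma>" "0 \<le> - \<beta> / \<gamma>"
proof -
  have \<gamma>: "\<gamma> \<noteq> 0" using signs sum by auto
  have "\<gamma> *\<^sub>R (C - U) = - (\<alpha> *\<^sub>R (A - U) + \<beta> *\<^sub>R (B - U))"
    using zero by (subst eq_neg_iff_add_eq_0) (simp only: add.commute)
  then have "C - U = inverse \<gamma> *\<^sub>R (- (\<alpha> *\<^sub>R (A - U) + \<beta> *\<^sub>R (B - U)))"
    using \<gamma> by (metis scaleR_scaleR left_inverse scaleR_one)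
  then show "C - U = (- \<alpha> / \<gamma>) *\<^sub>R (A - U) + (- \<beta> / \<gamma>) *\<^sub>R (B - U)"
    by (simp add: scaleR_add_right scaleR_diff_right divide_inverse mult.commute)
  show "0 \<le> - \<alpha> / \<gamma>" "0 \<le> - \<beta> / \<gamma>"
    using signs sum by (auto simp: divide_nonneg_neg divide_nonpos_pos)
qed

lemma cone_cases_if_not_in_triangle:
  fixes A B C U :: "real^2"
  assumes ncol: "\<not> collinear {A, B, C}" and out: "U \<notin> convex hull {A, B, C}"
  obtains \<mu> \<nu> where "0 \<le> \<mu>" "0 \<le> \<nu>" "C - U = \<mu> *\<^sub>R (A - U) + \<nu> *\<^sub>R (B - U)"
    | \<mu> \<nu> where "0 \<le> \<mu>" "0 \<le> \<nu>" "B - U = \<mu> *\<^sub>R (A - U) + \<nu> *\<^sub>R (C - U)"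
    | \<mu> \<nu> where "0 \<le> \<mu>" "0 \<le> \<nu>" "A - U = \<mu> *\<^sub>R (B - U) + \<nu> *\<^sub>R (C - U)"
proof -
  obtain \<alpha> \<beta> \<gamma> where sum: "\<alpha> + \<beta> + \<gamma> = 1" and U: "U = \<alpha> *\<^sub>R A + \<beta> *\<^sub>R B + \<gamma> *\<^sub>R C"
    and zero: "\<alpha> *\<^sub>R (A - U) + \<beta> *\<^sub>R (B - U) + \<gamma> *\<^sub>R (C - U) = 0"
    using barycentric_coords_cross2[OF cross2_ne_0_if_not_collinear(1)[OF ncol]] by blast
  have "\<alpha> < 0 \<or> \<beta> < 0 \<or> \<gamma> < 0"
  proof (rule ccontr)
    assume "\<not> (\<alpha> < 0 \<or> \<beta> < 0 \<or> \<gamma> < 0)"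
    then have "U \<in> convex hull {A, B, C}"
      unfolding convex_hull_3 using sum U by (intro CollectI exI[of _ \<alpha>] exI[of _ \<beta>] exI[of _ \<gamma>]) auto
    then show False using out by simp
  qed
  moreover have "(\<gamma> < 0 \<and> 0 \<le> \<alpha> \<and> 0 \<le> \<beta>) \<or> (\<alpha> < 0 \<and> \<beta> < 0) \<Longrightarrow> thesis"
    using cone_if_barycentric_signs[OF zero sum] that(1) by metis
  moreover have "(\<beta> < 0 \<and> 0 \<le> \<alpha> \<and> 0 \<le> \<gamma>) \<or> (\<alpha> < 0 \<and> \<gamma> < 0) \<Longrightarrow> thesis"
  proof -
    assume signs: "(\<beta> < 0 \<and> 0 \<le> \<alpha> \<and> 0 \<le> \<gamma>) \<or> (\<alpha> < 0 \<and> \<gamma> < 0)"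
    have "\<alpha> *\<^sub>R (A - U) + \<gamma> *\<^sub>R (C - U) + \<beta> *\<^sub>R (B - U) = 0" "\<alpha> + \<gamma> + \<beta> = 1"
      using zero sum by (simp_all add: add_ac)
    note cone = cone_if_barycentric_signs[OF this signs]
    show thesis by (rule that(2)[OF cone(2,3,1)])
  qed
  moreover have "(\<alpha> < 0 \<and> 0 \<le> \<beta> \<and> 0 \<le> \<gamma>) \<or> (\<beta> < 0 \<and> \<gamma> < 0) \<Longrightarrow> thesis"
  proof -
    assume signs: "(\<alpha> < 0 \<and> 0 \<le> \<beta> \<and> 0 \<le> \<gamma>) \<or> (\<beta> < 0 \<and> \<gamma> < 0)"
    have "\<beta> *\<^sub>R (B - U) + \<gamma> *\<^sub>R (C - U) + \<alpha> *\<^sub>R (A - U) = 0" "\<beta> + \<gamma> + \<alpha> = 1"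
      using zero sum by (simp_all add: add_ac)
    note cone = cone_if_barycentric_signs[OF this signs]
    show thesis by (rule that(3)[OF cone(2,3,1)])
  qed
  ultimately show thesis by linarith
qed

lemma eva_bound_in_cone:
  fixes A B C U :: "real^2" and \<mu> \<nu> r ds \<theta> :: real
  assumes ncol: "\<not> collinear {A, B, C}" and U: "U \<notin> {A, B, C}"
    and cone: "C - U = \<mu> *\<^sub>R (A - U) + \<nu> *\<^sub>R (B - U)" "0 \<le> \<mu>" "0 \<le> \<nu>"
    and r: "0 < r" "dist U A \<le> r" "dist U B \<le> r" "dist U C \<le> r"
    and ds: "0 \<le> ds" "ds \<le> dist A B" "ds \<le> 2 * r"
    and \<theta>: "0 \<le> \<theta>" "\<theta> \<le> pi/3" and angles: "\<theta> \<le> angle3 B A C" "\<theta> \<le> angle3 A B C"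
  shows "\<bar>pi/2 - eva U A B C\<bar> \<le> pi/2 - 2 * arctan (ds / (2 * r) * tan (\<theta>/2))"
proof -
  define k T t where "k = cos \<theta>" and "T = tan (\<theta>/2)" and "t = ds / (2 * r) * tan (\<theta>/2)"
  have "cos (pi/3) \<le> cos \<theta>" using \<theta> by (subst cos_mono_le_eq) auto
  then have k: "1/2 \<le> k" by (simp add: k_def cos_60)
  have T_eq: "T = sin \<theta> / (1 + k)" using tan_half[of "\<theta>/2"] by (simp add: T_def k_def add.commute)
  have T: "0 \<le> T" using T_eq k sin_ge_zero[of \<theta>] \<theta> by simp
  have Tk: "T\<^sup>2 * (1 + k) = 1 - k"
  proof -
    have "T\<^sup>2 * (1 + k) = (sin \<theta>)\<^sup>2 / (1 + k)" using k by (simp add: T_eq power2_eq_square)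
    also have "\<dots> = (1 - k) * (1 + k) / (1 + k)" by (simp add: k_def sin_squared_eq algebra_simps power2_eq_square)
    finally show ?thesis using k by simp
  qed
  have "\<bar>vcos (A - U) (B - U)\<bar> \<le> cos (2 * arctan t) \<or> \<bar>vcos (A - U) (C - U)\<bar> \<le> cos (2 * arctan t)
      \<or> \<bar>vcos (B - U) (C - U)\<bar> \<le> cos (2 * arctan t)"
    using abs_vcos_le_in_cone[of "A - U" "B - U" \<mu> \<nu> r ds k T] cone(1)[symmetric] cone(2,3) U r ds T Tk k
      cross2_ne_0_if_not_collinear[OF ncol] vcos_le_cos_if_angle3_ge[OF angles(1) \<theta>(1)]
      vcos_le_cos_if_angle3_ge[OF angles(2) \<theta>(1)] \<theta>
    by (auto simp: t_def T_def k_def dist_norm norm_minus_commute)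
  moreover have "0 \<le> 2 * arctan t" using ds r T unfolding t_def T_def[symmetric] by simp
  moreover have "2 * arctan t \<le> pi/2"
  proof -
    have "ds * T \<le> 2 * r * T" by (rule mult_right_mono[OF ds(3) T])
    then have "t \<le> T" using r unfolding t_def T_def[symmetric] by (simp add: divide_le_eq mult.commute)
    then have "arctan t \<le> arctan T" by (simp add: arctan_le_iff)
    also have "arctan T = \<theta>/2" using \<theta> pi_gt_zero unfolding T_def by (intro arctan_tan) linarith+
    finally show ?thesis using \<theta> by simp
  qed
  ultimately show ?thesis unfolding t_def by (intro eva_bound)
qed

lemma eva_bound_outside_triangle:
  fixes A B C U :: "real^2" and r ds \<theta> :: real
  assumes ncol: "\<not> collinear {A, B, C}" and out: "U \<notin> convex hull {A, B, C}" and U: "U \<notin> {A, B, C}"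
    and r: "0 < r" "dist U A \<le> r" "dist U B \<le> r" "dist U C \<le> r"
    and ds: "0 \<le> ds" "ds \<le> 2 * r" and sides: "ds \<le> dist A B" "ds \<le> dist A C" "ds \<le> dist B C"
    and \<theta>: "0 \<le> \<theta>" "\<theta> \<le> pi/3"
    and angles: "\<theta> \<le> angle3 B A C" "\<theta> \<le> angle3 A B C" "\<theta> \<le> angle3 A C B"
  shows "\<bar>pi/2 - eva U A B C\<bar> \<le> pi/2 - 2 * arctan (ds / (2 * r) * tan (\<theta>/2))"
proof (rule cone_cases_if_not_in_triangle[OF ncol out])
  fix \<mu> \<nu> assume "0 \<le> \<mu>" "0 \<le> \<nu>" "C - U = \<mu> *\<^sub>R (A - U) + \<nu> *\<^sub>R (B - U)"
  from eva_bound_in_cone[OF ncol U this(3,1,2) r ds(1) sides(1) ds(2) \<theta> angles(1,2)]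
  show ?thesis .
next
  fix \<mu> \<nu> assume "0 \<le> \<mu>" "0 \<le> \<nu>" "B - U = \<mu> *\<^sub>R (A - U) + \<nu> *\<^sub>R (C - U)"
  moreover have "\<not> collinear {A, C, B}" "U \<notin> {A, C, B}" using ncol U by (simp_all add: insert_commute)
  ultimately have "\<bar>pi/2 - eva U A C B\<bar> \<le> pi/2 - 2 * arctan (ds / (2 * r) * tan (\<theta>/2))"
    using eva_bound_in_cone[of A C B U \<mu> \<nu> r ds \<theta>] r ds sides \<theta> angles
    by (simp add: angle3_commute[of C A B])
  then show ?thesis by (simp only: abs_pi_half_minus_eva_permute(1))
next
  fix \<mu> \<nu> assume "0 \<le> \<mu>" "0 \<le> \<nu>" "A - U = \<mu> *\<^sub>R (B - U) + \<nu> *\<^sub>R (C - U)"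
  moreover have "\<not> collinear {B, C, A}" "U \<notin> {B, C, A}" using ncol U by (simp_all add: insert_commute)
  ultimately have "\<bar>pi/2 - eva U B C A\<bar> \<le> pi/2 - 2 * arctan (ds / (2 * r) * tan (\<theta>/2))"
    using eva_bound_in_cone[of B C A U \<mu> \<nu> r ds \<theta>] r ds sides \<theta> angles
    by (simp add: angle3_commute[of C B A] angle3_commute[of B C A])
  then show ?thesis by (simp only: abs_pi_half_minus_eva_permute(2))
qed

theorem theorem1:
  fixes r ds ths :: real and Qi Qj Qk U :: "real^2"
  assumes "r > 0"
    and "0 \<le> ds" "ds \<le> 2 * r"
    and "0 \<le> ths" "ths \<le> pi / 3"
    and "ref_triplet ds ths Qi Qj Qk"
    and "U \<notin> {Qi, Qj, Qk}"
    and "dist U Qi \<le> r" "dist U Qj \<le> r" "dist U Qk \<le> r"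
  shows "(U \<in> convex hull {Qi, Qj, Qk} \<longrightarrow>
            \<bar>pi / 2 - eva U Qi Qj Qk\<bar> \<le> pi / 2 - ths) \<and>
         (U \<notin> convex hull {Qi, Qj, Qk} \<longrightarrow>
            \<bar>pi / 2 - eva U Qi Qj Qk\<bar> \<le> pi / 2 - 2 * arctan (ds / (2 * r) * tan (ths / 2)))"
proof -
  have ncol: "\<not> collinear {Qi, Qj, Qk}"
    and sides: "ds \<le> dist Qi Qj" "ds \<le> dist Qi Qk" "ds \<le> dist Qj Qk"
    and angles: "ths \<le> angle3 Qj Qi Qk" "ths \<le> angle3 Qi Qj Qk" "ths \<le> angle3 Qi Qk Qj"
    using assms(6) unfolding ref_triplet_def by auto
  show ?thesis
    using eva_bound_inside_triangle[OF ncol _ assms(7,4,5) angles]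
      eva_bound_outside_triangle[OF ncol _ assms(7,1,8-10,2,3) sides assms(4,5) angles]
    by simp
qed

end
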